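(* Let $k\neq 0$, $a$, $b$ be real numbers and let $\{S^{(a,b)}_{k,n}\}_{n\ge 0}$ be the generalized $k$-FL sequence. (a) For an even integer $n\ge 2$, if $S^{(a,b)}_{k,n+1}-S^{(a,b)}_{k,n}\neq -bk+2b-a$, then the matrix $A^{(k,a,b)}_n$ is invertible. (b) For an odd integer $n\ge 1$, the matrix $B^{(k,a,b)}_n$ is invertible if and only if $S^{(a,b)}_{k,n+1}+S^{(a,b)}_{k,n}\neq bk+2b+a$.
   Context: For real numbers $k,a,b$, the generalized $k$-FL sequence $\{S^{(a,b)}_{k,n}\}_{n\ge0}$ is defined by $S^{(a,b)}_{k,0}=2b$, $S^{(a,b)}_{k,1}=bk+a$, and $S^{(a,b)}_{k,n}=k\,S^{(a,b)}_{k,n-1}+S^{(a,b)}_{k,n-2}$ for $n\ge2$. For $n\ge1$, $A^{(k,a,b)}_n$ is the $n\times n$ real skew circulant matrix whose $(i,j)$ entry is $S^{(a,b)}_{k,j-i+1}$ if $j\ge i$ and $-S^{(a,b)}_{k,n+j-i+1}$ if $j<i$. $B^{(k,a,b)}_n$ is the $n\times n$ circulant matrix whose $(i,j)$ entry is $S^{(a,b)}_{k,j-i+1}$ if $j\ge i$ and $S^{(a,b)}_{k,n+j-i+1}$ if $j<i$. *)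

theory Defs
  imports "Jordan_Normal_Form.Matrix" "Jordan_Normal_Form.Determinant"
begin

fun kFL :: "real \<Rightarrow> real \<Rightarrow> real \<Rightarrow> nat \<Rightarrow> real" where
  "kFL k a b 0 = 2 * b"
| "kFL k a b (Suc 0) = b * k + a"
| "kFL k a b (Suc (Suc n)) = k * kFL k a b (Suc n) + kFL k a b n"

text \<open>Skew circulant matrix A_n (0-based indices; the index shift cancels).\<close>
definition skewcircA :: "real \<Rightarrow> real \<Rightarrow> real \<Rightarrow> nat \<Rightarrow> real mat" where
  "skewcircA k a b n = mat n n (\<lambda>(i, j).
     if j \<ge> i then kFL k a b (j - i + 1) else - kFL k a b (n + j - i + 1))"

definition circB :: "real \<Rightarrow> real \<Rightarrow> real \<Rightarrow> nat \<Rightarrow> real mat" where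
  "circB k a b n = mat n n (\<lambda>(i, j).
     if j \<ge> i then kFL k a b (j - i + 1) else kFL k a b (n + j - i + 1))"

end

theory Submission imports Defs begin

text \<open>Both matrices are \<sigma>-circulants (\<sigma> = -1 for A, \<sigma> = 1 for B) with first row
  S(1), ..., S(n). Extending a kernel vector \<sigma>-periodically to a sequence x, every window sum
  \<Sum>d<n. S(d+1) x(i+d) vanishes, and the recurrence of S telescopes three consecutive windows
  into the two-term recurrence (S(1) - \<sigma> S(n+1)) x(i) + (S(0) - \<sigma> S(n)) x(i+1) = 0.
  So x is geometric with some ratio r, and periodicity forces r^n = \<sigma>: impossible for
  \<sigma> = -1 and n even, and for \<sigma> = 1 and n odd only r = 1 remains, which is the excluded case.
  Conversely, the all-ones vector lies in the kernel of a circulant exactly when its row sum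
  vanishes, and k (\<Sum>d<n. S(d+1)) = S(n+1) + S(n) - S(1) - S(0).\<close>

lemma invertible_mat_iff_det_nonzero:
  fixes A :: "'a::field mat"
  assumes A: "A \<in> carrier_mat n n"
  shows "invertible_mat A \<longleftrightarrow> det A \<noteq> 0"
proof
  assume "invertible_mat A"
  then obtain B where AB: "A * B = 1\<^sub>m n" and BA: "B * A = 1\<^sub>m (dim_row B)"
    using A unfolding invertible_mat_def inverts_mat_def by auto
  have B: "B \<in> carrier_mat n n"
    using arg_cong[OF AB, of dim_col] arg_cong[OF BA, of dim_col] A by auto
  have "det A * det B = 1"
    using AB det_mult[OF A B] by simp
  then show "det A \<noteq> 0" by auto
next
  assume "det A \<noteq> 0"
  from det_non_zero_imp_unit[OF A this, of "()"]
  obtain B where "B \<in> carrier_mat n n" "A * B = 1\<^sub>m n" "B * A = 1\<^sub>m n"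
    unfolding Units_def ring_mat_def by auto
  then show "invertible_mat A"
    using A unfolding invertible_mat_def inverts_mat_def by auto
qed

lemma invertible_mat_iff_trivial_kernel:
  fixes A :: "'a::field mat"
  assumes "A \<in> carrier_mat n n"
  shows "invertible_mat A \<longleftrightarrow> (\<forall>v\<in>carrier_vec n. A *\<^sub>v v = 0\<^sub>v n \<longrightarrow> v = 0\<^sub>v n)"
  using invertible_mat_iff_det_nonzero[OF assms] det_0_iff_vec_prod_zero_field[OF assms]
  by blast

definition sigma_circulant :: "'a::comm_ring_1 \<Rightarrow> (nat \<Rightarrow> 'a) \<Rightarrow> nat \<Rightarrow> 'a mat" where
  "sigma_circulant \<sigma> c n = mat n n (\<lambda>(i, j). if i \<le> j then c (j - i) else \<sigma> * c (n + j - i))"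

lemma sigma_circulant_carrier: "sigma_circulant \<sigma> c n \<in> carrier_mat n n"
  unfolding sigma_circulant_def by simp

lemma skewcircA_eq_sigma_circulant:
  "skewcircA k a b n = sigma_circulant (-1) (\<lambda>d. kFL k a b (d + 1)) n"
  unfolding skewcircA_def sigma_circulant_def by (rule cong_mat) auto

lemma circB_eq_sigma_circulant:
  "circB k a b n = sigma_circulant 1 (\<lambda>d. kFL k a b (d + 1)) n"
  unfolding circB_def sigma_circulant_def by (rule cong_mat) auto

definition periodic_ext :: "'a::comm_ring_1 \<Rightarrow> nat \<Rightarrow> 'a vec \<Rightarrow> nat \<Rightarrow> 'a" where
  "periodic_ext \<sigma> n v j = \<sigma> ^ (j div n) * v $ (j mod n)"

lemma periodic_ext_less: "j < n \<Longrightarrow> periodic_ext \<sigma> n v j = v $ j"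
  unfolding periodic_ext_def by simp

lemma periodic_ext_add_period:
  "0 < n \<Longrightarrow> periodic_ext \<sigma> n v (j + n) = \<sigma> * periodic_ext \<sigma> n v j"
  unfolding periodic_ext_def by simp

lemma sigma_circulant_mult_vec_nth:
  assumes i: "i < n" and v: "v \<in> carrier_vec n"
  shows "(sigma_circulant \<sigma> c n *\<^sub>v v) $ i = (\<Sum>d<n. c d * periodic_ext \<sigma> n v (i + d))"
proof -
  let ?e = "\<lambda>j. if i \<le> j then c (j - i) else \<sigma> * c (n + j - i)"
  have "(sigma_circulant \<sigma> c n *\<^sub>v v) $ i = (\<Sum>j<n. ?e j * v $ j)"
    using i v unfolding sigma_circulant_def
    by (auto simp: scalar_prod_def atLeast0LessThan intro!: sum.cong)
  also have "\<dots> = (\<Sum>d<n. c d * periodic_ext \<sigma> n v (i + d))"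
  proof (rule sym, rule sum.reindex_bij_witness[where j = "\<lambda>d. (i + d) mod n"
        and i = "\<lambda>j. (j + n - i) mod n"])
    fix d assume d: "d \<in> {..<n}"
    show "?e ((i + d) mod n) * v $ ((i + d) mod n) = c d * periodic_ext \<sigma> n v (i + d)"
    proof (cases "i + d < n")
      case True
      then show ?thesis by (simp add: periodic_ext_less)
    next
      case False
      then have "i + d - n < n" "i + d - n < i"
        using i d by auto
      then have "(i + d) mod n = i + d - n" "\<not> i \<le> i + d - n" "n + (i + d - n) - i = d"
        using i d False by (auto simp: mod_if)
      moreover have "periodic_ext \<sigma> n v (i + d) = \<sigma> * v $ (i + d - n)"
        using periodic_ext_add_period[of n \<sigma> v "i + d - n"] periodic_ext_less[of "i + d - n" n \<sigma> v]
          \<open>i + d - n < n\<close> False by simp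
      ultimately show ?thesis by simp
    qed
  qed (use i in \<open>auto simp: mod_add_left_eq mod_if\<close>)
  finally show ?thesis .
qed

lemma sigma_circulant_kernel_window_sum:
  assumes n: "0 < n" and v: "v \<in> carrier_vec n" and ker: "sigma_circulant \<sigma> c n *\<^sub>v v = 0\<^sub>v n"
  shows "(\<Sum>d<n. c d * periodic_ext \<sigma> n v (i + d)) = 0"
proof (induction i rule: less_induct)
  case (less i)
  show ?case
  proof (cases "i < n")
    case True
    then show ?thesis
      using ker sigma_circulant_mult_vec_nth[OF True v, of \<sigma> c] by simp
  next
    case False
    have shift: "periodic_ext \<sigma> n v (i + d) = \<sigma> * periodic_ext \<sigma> n v (i - n + d)" for d
      using periodic_ext_add_period[OF n, of \<sigma> v "i - n + d"] False by simp
    have "(\<Sum>d<n. c d * periodic_ext \<sigma> n v (i + d))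
        = \<sigma> * (\<Sum>d<n. c d * periodic_ext \<sigma> n v (i - n + d))"
      unfolding shift sum_distrib_left by (simp add: algebra_simps)
    also have "\<dots> = 0"
    proof -
      have "i - n < i"
        using n False by simp
      then show ?thesis
        using less.IH by simp
    qed
    finally show ?thesis .
  qed
qed

lemma kFL_window_sum_telescope:
  fixes x :: "nat \<Rightarrow> real"
  shows "(\<Sum>d<n. kFL k a b (d + 1) * x (i + d))
       - k * (\<Sum>d<n. kFL k a b (d + 1) * x (i + 1 + d))
       - (\<Sum>d<n. kFL k a b (d + 1) * x (i + 2 + d))
       = kFL k a b 1 * x i + kFL k a b 0 * x (i + 1)
       - kFL k a b (n + 1) * x (i + n) - kFL k a b n * x (i + n + 1)"
proof (induction n)
  case 0
  then show ?case by simp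
next
  case (Suc n)
  have "kFL k a b (n + 2) = k * kFL k a b (n + 1) + kFL k a b n"
    by (simp add: numeral_2_eq_2)
  moreover have "i + 1 + n = i + n + 1" "i + 2 + n = i + (n + 2)" "i + Suc n = i + n + 1"
      "Suc n + 1 = n + 2"
    by auto
  ultimately show ?case
    using Suc unfolding sum.lessThan_Suc by (simp add: algebra_simps)
qed

lemma kFL_partial_sum:
  "k * (\<Sum>d<n. kFL k a b (d + 1)) = kFL k a b (n + 1) + kFL k a b n - kFL k a b 1 - kFL k a b 0"
proof (induction n)
  case 0
  then show ?case by simp
next
  case (Suc n)
  have "kFL k a b (Suc n + 1) = k * kFL k a b (n + 1) + kFL k a b n"
    by simp
  then show ?case
    using Suc by (simp add: algebra_simps)
qed

lemma first_order_recurrence_periodic: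
  fixes x :: "nat \<Rightarrow> 'a::field"
  assumes rec: "\<And>i. u * x i + w * x (i + 1) = 0" and nondeg: "u \<noteq> 0 \<or> w \<noteq> 0"
    and period: "x n = \<sigma> * x 0" and nonzero: "x j \<noteq> 0"
  shows "w \<noteq> 0 \<and> (- u / w) ^ n = \<sigma>"
proof
  show w: "w \<noteq> 0"
    using rec[of j] nondeg nonzero by auto
  have geom: "x i = (- u / w) ^ i * x 0" for i
  proof (induction i)
    case (Suc i)
    have "x (Suc i) = - u / w * x i"
      using rec[of i] w by (simp add: field_simps add_eq_0_iff2)
    then show ?case
      using Suc by simp
  qed simp
  have "x 0 \<noteq> 0"
    using geom[of j] nonzero by auto
  then show "(- u / w) ^ n = \<sigma>"
    using geom[of n] period by simp
qed

lemma kFL_sigma_circulant_singular: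
  fixes \<sigma> :: real
  assumes n: "0 < n"
    and singular: "\<not> invertible_mat (sigma_circulant \<sigma> (\<lambda>d. kFL k a b (d + 1)) n)"
    and nondeg: "kFL k a b 1 - \<sigma> * kFL k a b (n + 1) \<noteq> 0 \<or> kFL k a b 0 - \<sigma> * kFL k a b n \<noteq> 0"
  shows "kFL k a b 0 - \<sigma> * kFL k a b n \<noteq> 0
    \<and> (- (kFL k a b 1 - \<sigma> * kFL k a b (n + 1)) / (kFL k a b 0 - \<sigma> * kFL k a b n)) ^ n = \<sigma>"
proof -
  obtain v where v: "v \<in> carrier_vec n" "v \<noteq> 0\<^sub>v n"
    and ker: "sigma_circulant \<sigma> (\<lambda>d. kFL k a b (d + 1)) n *\<^sub>v v = 0\<^sub>v n"
    using singular invertible_mat_iff_trivial_kernel[OF sigma_circulant_carrier] by blast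
  define x where "x = periodic_ext \<sigma> n v"
  have window: "(\<Sum>d<n. kFL k a b (d + 1) * x (i + d)) = 0" for i
    unfolding x_def by (rule sigma_circulant_kernel_window_sum[OF n v(1) ker])
  have period: "x (i + n) = \<sigma> * x i" for i
    unfolding x_def by (rule periodic_ext_add_period[OF n])
  define u where "u = kFL k a b 1 - \<sigma> * kFL k a b (n + 1)"
  define w where "w = kFL k a b 0 - \<sigma> * kFL k a b n"
  have rec: "u * x i + w * x (i + 1) = 0" for i
    using kFL_window_sum_telescope[where x = x and n = n and k = k and a = a and b = b and i = i]
      window[of i] window[of "i + 1"] window[of "i + 2"] period[of i] period[of "i + 1"]
    unfolding u_def w_def by (simp add: algebra_simps)
  obtain j where "j < n" "v $ j \<noteq> 0"
    using v by (metis eq_vecI carrier_vecD index_zero_vec)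
  then have "x j \<noteq> 0"
    unfolding x_def by (simp add: periodic_ext_less)
  then have "w \<noteq> 0 \<and> (- u / w) ^ n = \<sigma>"
    using first_order_recurrence_periodic[where x = x and u = u and w = w, OF rec] nondeg period[of 0]
    unfolding u_def w_def by simp
  then show ?thesis
    unfolding u_def w_def .
qed

lemma circulant_singular_if_row_sum_zero:
  fixes c :: "nat \<Rightarrow> 'a::field"
  assumes n: "0 < n" and "(\<Sum>d<n. c d) = 0"
  shows "\<not> invertible_mat (sigma_circulant 1 c n)"
proof -
  define ones :: "'a vec" where "ones = vec n (\<lambda>_. 1)"
  have ones: "ones \<in> carrier_vec n" "ones \<noteq> 0\<^sub>v n"
    using n unfolding ones_def by (auto dest!: arg_cong[where f = "\<lambda>v. v $ 0"])
  have "periodic_ext 1 n ones j = 1" for j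
    using n unfolding periodic_ext_def ones_def by simp
  then have "sigma_circulant 1 c n *\<^sub>v ones = 0\<^sub>v n"
    using sigma_circulant_mult_vec_nth[OF _ ones(1)] assms(2)
    by (intro eq_vecI) (auto simp: sigma_circulant_def)
  then show ?thesis
    using ones invertible_mat_iff_trivial_kernel[OF sigma_circulant_carrier] by blast
qed

lemma real_odd_power_eq_1_iff:
  fixes r :: real
  assumes "odd n"
  shows "r ^ n = 1 \<longleftrightarrow> r = 1"
proof
  assume r: "r ^ n = 1"
  then have "\<bar>r\<bar> = 1"
    using power_eq_1_iff[of r n] assms by auto
  then show "r = 1"
    using r assms by (auto simp: abs_if split: if_splits)
qed simp

theorem theorem2p7:
  fixes k a b :: real
  assumes "k \<noteq> 0"
  shows "(\<forall>n::nat. even n \<and> n \<ge> 2 \<and>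
            kFL k a b (n + 1) - kFL k a b n \<noteq> - b * k + 2 * b - a
            \<longrightarrow> invertible_mat (skewcircA k a b n))
       \<and> (\<forall>n::nat. odd n \<longrightarrow>
            (invertible_mat (circB k a b n) \<longleftrightarrow>
             kFL k a b (n + 1) + kFL k a b n \<noteq> b * k + 2 * b + a))"
proof (intro conjI allI impI)
  fix n :: nat
  assume hyp: "even n \<and> n \<ge> 2 \<and> kFL k a b (n + 1) - kFL k a b n \<noteq> - b * k + 2 * b - a"
  show "invertible_mat (skewcircA k a b n)"
  proof (rule ccontr)
    assume "\<not> invertible_mat (skewcircA k a b n)"
    from kFL_sigma_circulant_singular[OF _ this[unfolded skewcircA_eq_sigma_circulant]]
    obtain r :: real where "r ^ n = -1"
      using hyp by (auto simp: One_nat_def)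
    moreover have "0 \<le> r ^ n"
      using hyp by (simp add: zero_le_even_power)
    ultimately show False by simp
  qed
next
  fix n :: nat
  assume odd: "odd n"
  then have n: "0 < n" by (rule odd_pos)
  show "invertible_mat (circB k a b n) \<longleftrightarrow> kFL k a b (n + 1) + kFL k a b n \<noteq> b * k + 2 * b + a"
    unfolding circB_eq_sigma_circulant
  proof
    assume inv: "invertible_mat (sigma_circulant 1 (\<lambda>d. kFL k a b (d + 1)) n)"
    show "kFL k a b (n + 1) + kFL k a b n \<noteq> b * k + 2 * b + a"
    proof
      assume "kFL k a b (n + 1) + kFL k a b n = b * k + 2 * b + a"
      then have "(\<Sum>d<n. kFL k a b (d + 1)) = 0"
        using kFL_partial_sum[of k a b n] assms by (simp add: One_nat_def)
      then show False
        using circulant_singular_if_row_sum_zero[OF n] inv by blast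
    qed
  next
    assume hyp: "kFL k a b (n + 1) + kFL k a b n \<noteq> b * k + 2 * b + a"
    show "invertible_mat (sigma_circulant 1 (\<lambda>d. kFL k a b (d + 1)) n)"
    proof (rule ccontr)
      assume "\<not> invertible_mat (sigma_circulant 1 (\<lambda>d. kFL k a b (d + 1)) n)"
      from kFL_sigma_circulant_singular[OF n this]
      have "kFL k a b 0 - kFL k a b n \<noteq> 0"
        and "- (kFL k a b 1 - kFL k a b (n + 1)) / (kFL k a b 0 - kFL k a b n) = 1"
        using hyp real_odd_power_eq_1_iff[OF odd] by (auto simp: One_nat_def)
      then show False
        using hyp by (simp add: field_simps One_nat_def)
    qed
  qed
qed

end
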